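(* Let $n\ge1$ and let $c:E_n\to\mathbb C$ be an admissible edge weighting of $Q_n$ with $c(ij)\ne0$ for all edges $ij\in E_n$. Then there is $\mathbf t=[t_0,\dots,t_{n-1}]\in\Delta_{n-1}$ such that $|c(ij)|=\sqrt{t_k}$ for all edges $ij\in E_n$ with $i = j\#k$.
   Context: For $n\ge1$, identify integers $0\le i<2^n$ with their $n$-digit binary representations; $i\#k$ is $i$ with its $k$-th digit flipped. The hypercube $Q_n$ has vertex classes $U_n$ (even number of $1$'s) and $V_n$ (odd number of $1$'s) and edge set $E_n$ of pairs $ij$ ($i\in U_n$, $j\in V_n$, $j=i\#k$ for some $k<n$); $\mathcal N(x)$ is the set of neighbors of $x$. $\Delta_{n-1}=\{[t_0,\dots,t_{n-1}]\mid t_k\ge0,\sum t_k=1\}$. For $c:E_n\to\mathbb C$, $U_n(c)$, $V_n(c)$ are the vertices of $U_n$, $V_n$ incident to some edge with nonzero weight; $c$ is admissible if $\sum_{i\in\mathcal N(j_1)\cap\mathcal N(j_2)}c(ij_1)\overline{c(ij_2)}=\delta_{j_1j_2}$ for all $j_1,j_2\in V_n(c)$ and $\sum_{j\in\mathcal N(i_1)\cap\mathcal N(i_2)}c(i_1j)\overline{c(i_2j)}=\delta_{i_1i_2}$ for all $i_1,i_2\in U_n(c)$. *)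

theory Defs
  imports "HOL-Analysis.Analysis"
begin

text \<open>Vertices of Q_n: naturals i < 2^n, identified with their n binary digits;
  digit k of i is bit i k.\<close>

definition verts :: "nat \<Rightarrow> nat set" where
  "verts n = {..<2^n}"

definition ones :: "nat \<Rightarrow> nat \<Rightarrow> nat" where
  "ones n i = card {k. k < n \<and> bit i k}"

definition flip :: "nat \<Rightarrow> nat \<Rightarrow> nat" where
  "flip i k = (if bit i k then i - 2^k else i + 2^k)"

definition Uv :: "nat \<Rightarrow> nat set" where
  "Uv n = {i \<in> verts n. even (ones n i)}"

definition Vv :: "nat \<Rightarrow> nat set" where
  "Vv n = {j \<in> verts n. odd (ones n j)}"

definition edges :: "nat \<Rightarrow> (nat \<times> nat) set" where
  "edges n = {(i, j). i \<in> Uv n \<and> j \<in> Vv n \<and> (\<exists>k<n. j = flip i k)}"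

definition nbrs :: "nat \<Rightarrow> nat \<Rightarrow> nat set" where
  "nbrs n x = {y \<in> verts n. \<exists>k<n. y = flip x k}"

text \<open>An edge weighting is a function c on pairs; only its values on edges matter.\<close>

definition Uc :: "nat \<Rightarrow> (nat \<Rightarrow> nat \<Rightarrow> complex) \<Rightarrow> nat set" where
  "Uc n c = {i \<in> Uv n. \<exists>j. (i, j) \<in> edges n \<and> c i j \<noteq> 0}"

definition Vc :: "nat \<Rightarrow> (nat \<Rightarrow> nat \<Rightarrow> complex) \<Rightarrow> nat set" where
  "Vc n c = {j \<in> Vv n. \<exists>i. (i, j) \<in> edges n \<and> c i j \<noteq> 0}"

definition admissible :: "nat \<Rightarrow> (nat \<Rightarrow> nat \<Rightarrow> complex) \<Rightarrow> bool" where
  "admissible n c \<longleftrightarrow>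
     (\<forall>j1\<in>Vc n c. \<forall>j2\<in>Vc n c.
        (\<Sum>i\<in>nbrs n j1 \<inter> nbrs n j2. c i j1 * cnj (c i j2)) = (if j1 = j2 then 1 else 0)) \<and>
     (\<forall>i1\<in>Uc n c. \<forall>i2\<in>Uc n c.
        (\<Sum>j\<in>nbrs n i1 \<inter> nbrs n i2. c i1 j * cnj (c i2 j)) = (if i1 = i2 then 1 else 0))"

definition Delta :: "nat \<Rightarrow> (nat \<Rightarrow> real) set" where
  "Delta n = {t. (\<forall>k<n. t k \<ge> 0) \<and> (\<Sum>k<n. t k) = 1}"

end

theory Submission
  imports Defs
begin

text \<open>For k \<noteq> l the vertices x, x#k, x#l, x#k#l form a 4-cycle of Q_n, and the two ends of
  each diagonal have exactly the other two vertices as common neighbours. Admissibility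
  therefore says that the 2x2 matrix of weights on this cycle has orthogonal rows and columns;
  as all weights are nonzero, opposite edges of the cycle have equal modulus. So the modulus
  of the direction-k edge at x does not change when x moves along any direction l, and
  since Q_n is connected it depends on k only. Writing it as sqrt t_k, the normalisation
  of the row of vertex 0 gives \<Sum> t_k = 1.\<close>

lemma flip_eq_flip_bit: "flip i k = flip_bit k i"
proof (cases "bit i k")
  case True
  have "set_bit k (unset_bit k i) = i"
    using True by (auto intro: bit_eqI simp: bit_set_bit_iff bit_unset_bit_iff)
  then have "i = unset_bit k i + 2 ^ k"
    by (simp add: set_bit_eq bit_unset_bit_iff)
  then show ?thesis
    using True by (simp add: flip_def flip_bit_eq_if)
next
  case False
  then show ?thesis by (simp add: flip_def flip_bit_eq_if set_bit_eq)
qed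

lemma bit_flip_iff: "bit (flip i k) m \<longleftrightarrow> (if m = k then \<not> bit i k else bit i m)"
  by (auto simp: flip_eq_flip_bit bit_flip_bit_iff)

lemma flip_flip [simp]: "flip (flip i k) k = i"
  by (rule bit_eqI) (auto simp: bit_flip_iff)

lemma flip_commute: "flip (flip i k) l = flip (flip i l) k"
  by (rule bit_eqI) (auto simp: bit_flip_iff)

lemma flip_eq_flip_iff: "flip i a = flip i b \<longleftrightarrow> a = b"
  by (metis bit_flip_iff)

lemma flip_flip_neq: "k \<noteq> l \<Longrightarrow> flip (flip i k) l \<noteq> i"
  by (metis bit_flip_iff)

lemma flip_less: "bit i k \<Longrightarrow> flip i k < i"
  by (cases "i = 0") (simp_all add: flip_def)

lemma verts_iff_take_bit: "x \<in> verts n \<longleftrightarrow> take_bit n x = x"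
  by (simp add: verts_def take_bit_nat_eq_self_iff)

lemma flip_in_verts: "x \<in> verts n \<Longrightarrow> k < n \<Longrightarrow> flip x k \<in> verts n"
  by (simp add: verts_iff_take_bit flip_eq_flip_bit take_bit_flip_bit_eq)

lemma bit_in_verts_less: "x \<in> verts n \<Longrightarrow> bit x k \<Longrightarrow> k < n"
  by (metis bit_take_bit_iff verts_iff_take_bit)

lemma even_ones_flip_iff:
  assumes "k < n"
  shows "even (ones n (flip i k)) \<longleftrightarrow> odd (ones n i)"
proof -
  let ?S = "\<lambda>x. {m. m < n \<and> bit x m}"
  have fin: "finite (?S x)" for x by simp
  have "?S i = insert k (?S (flip i k)) \<and> k \<notin> ?S (flip i k) \<or>
        ?S (flip i k) = insert k (?S i) \<and> k \<notin> ?S i"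
    using assms by (cases "bit i k") (auto simp: bit_flip_iff)
  then have "card (?S i) = Suc (card (?S (flip i k))) \<or> card (?S (flip i k)) = Suc (card (?S i))"
    using fin by fastforce
  then show ?thesis by (auto simp: ones_def)
qed

lemma flip_Uv_in_Vv: "i \<in> Uv n \<Longrightarrow> k < n \<Longrightarrow> flip i k \<in> Vv n"
  using even_ones_flip_iff[of k n i] flip_in_verts by (auto simp: Uv_def Vv_def)

lemma flip_Vv_in_Uv: "j \<in> Vv n \<Longrightarrow> k < n \<Longrightarrow> flip j k \<in> Uv n"
  using even_ones_flip_iff[of k n j] flip_in_verts by (auto simp: Uv_def Vv_def)

lemma verts_eq_Uv_Un_Vv: "verts n = Uv n \<union> Vv n"
  by (auto simp: Uv_def Vv_def)

lemma Uv_Int_Vv: "Uv n \<inter> Vv n = {}"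
  by (auto simp: Uv_def Vv_def)

lemma zero_in_Uv: "0 \<in> Uv n"
  by (simp add: Uv_def verts_def ones_def)

lemma mem_edges_iff: "(i, j) \<in> edges n \<longleftrightarrow> i \<in> Uv n \<and> (\<exists>k<n. j = flip i k)"
  using flip_Uv_in_Vv by (auto simp: edges_def)

lemma nbrs_eq_image: "x \<in> verts n \<Longrightarrow> nbrs n x = flip x ` {..<n}"
  using flip_in_verts by (auto simp: nbrs_def)

lemma sum_nbrs: "x \<in> verts n \<Longrightarrow> (\<Sum>y\<in>nbrs n x. f y) = (\<Sum>k<n. f (flip x k))"
  by (simp add: nbrs_eq_image sum.reindex inj_on_def flip_eq_flip_iff)

lemma nbrs_Int_flip_flip:
  assumes "x \<in> verts n" "k < n" "l < n" "k \<noteq> l"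
  shows "nbrs n (flip x k) \<inter> nbrs n (flip x l) = {x, flip (flip x k) l}"
proof
  show "nbrs n (flip x k) \<inter> nbrs n (flip x l) \<subseteq> {x, flip (flip x k) l}"
  proof
    fix y assume "y \<in> nbrs n (flip x k) \<inter> nbrs n (flip x l)"
    then obtain a b where y: "y = flip (flip x k) a" "y = flip (flip x l) b"
      unfolding nbrs_def by blast
    then have "bit (flip (flip x k) a) m = bit (flip (flip x l) b) m" for m by simp
    from this[of k] this[of l] have "a = k \<or> a = l \<and> b = k"
      using \<open>k \<noteq> l\<close> by (auto simp: bit_flip_iff split: if_splits)
    with y show "y \<in> {x, flip (flip x k) l}" by (auto simp: flip_commute)
  qed
  have "x = flip (flip x l) l" "flip (flip x k) l = flip (flip x l) k"
    by (simp_all add: flip_commute)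
  then show "{x, flip (flip x k) l} \<subseteq> nbrs n (flip x k) \<inter> nbrs n (flip x l)"
    using assms flip_in_verts unfolding nbrs_def by auto
qed

lemma nbrs_Int_nbrs_flip_flip:
  assumes "x \<in> verts n" "k < n" "l < n" "k \<noteq> l"
  shows "nbrs n x \<inter> nbrs n (flip (flip x k) l) = {flip x k, flip x l}"
proof
  show "nbrs n x \<inter> nbrs n (flip (flip x k) l) \<subseteq> {flip x k, flip x l}"
  proof
    fix y assume "y \<in> nbrs n x \<inter> nbrs n (flip (flip x k) l)"
    then obtain a b where y: "y = flip x a" "y = flip (flip (flip x k) l) b"
      unfolding nbrs_def by blast
    then have "bit (flip x a) m = bit (flip (flip (flip x k) l) b) m" for m by simp
    from this[of k] this[of l] have "a = k \<or> a = l"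
      using \<open>k \<noteq> l\<close> by (auto simp: bit_flip_iff split: if_splits)
    with y show "y \<in> {flip x k, flip x l}" by auto
  qed
  have "flip x k = flip (flip (flip x k) l) l" "flip x l = flip (flip (flip x k) l) k"
    by (simp_all add: flip_commute)
  then show "{flip x k, flip x l} \<subseteq> nbrs n x \<inter> nbrs n (flip (flip x k) l)"
    using assms flip_in_verts unfolding nbrs_def by auto
qed

lemma flip_invariant_imp_const:
  assumes inv: "\<And>x l. x \<in> verts n \<Longrightarrow> l < n \<Longrightarrow> f (flip x l) = f x"
  shows "x \<in> verts n \<Longrightarrow> f x = f 0"
proof (induction x rule: less_induct)
  case (less x)
  show ?case
  proof (cases "x = 0")
    case False
    then obtain l where "bit x l" using bit_eq_iff[of x 0] by auto
    with less.prems have l: "l < n" by (rule bit_in_verts_less)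
    have "f x = f (flip x l)" using inv[OF less.prems l] by simp
    also have "\<dots> = f 0"
      using less.IH[OF flip_less[OF \<open>bit x l\<close>] flip_in_verts[OF less.prems l]] .
    finally show ?thesis .
  qed simp
qed

lemma cmod_diag_eq_if_orthogonal:
  fixes a b d e :: complex
  assumes cols: "a * cnj b + d * cnj e = 0" and rows: "a * cnj d + b * cnj e = 0"
    and "b \<noteq> 0" "d \<noteq> 0"
  shows "cmod a = cmod e"
proof -
  have ab: "cmod a * cmod b = cmod d * cmod e"
    using arg_cong[OF cols[unfolded add_eq_0_iff], of cmod] by (simp add: norm_mult)
  have ad: "cmod a * cmod d = cmod b * cmod e"
    using arg_cong[OF rows[unfolded add_eq_0_iff], of cmod] by (simp add: norm_mult)
  have "(cmod a)\<^sup>2 * (cmod b * cmod d) = (cmod a * cmod b) * (cmod a * cmod d)"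
    by (simp add: power2_eq_square mult_ac)
  also have "\<dots> = (cmod e)\<^sup>2 * (cmod b * cmod d)"
    by (simp add: ab ad power2_eq_square mult_ac)
  finally have "(cmod a)\<^sup>2 = (cmod e)\<^sup>2"
    using \<open>b \<noteq> 0\<close> \<open>d \<noteq> 0\<close> by simp
  then show ?thesis
    by simp
qed

lemma Uc_eq_Uv:
  assumes "0 < n" "\<forall>(i, j)\<in>edges n. c i j \<noteq> 0"
  shows "Uc n c = Uv n"
  using assms by (fastforce simp: Uc_def mem_edges_iff)

lemma Vc_eq_Vv:
  assumes "0 < n" "\<forall>(i, j)\<in>edges n. c i j \<noteq> 0"
  shows "Vc n c = Vv n"
proof -
  have "(flip j 0, j) \<in> edges n" if "j \<in> Vv n" for j
    using that assms(1) flip_Vv_in_Uv by (auto simp: mem_edges_iff)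
  then show ?thesis
    using assms(2) by (fastforce simp: Vc_def)
qed

lemma admissible_rows_orthonormal:
  assumes "admissible n c" "0 < n" "\<forall>(i, j)\<in>edges n. c i j \<noteq> 0" "i1 \<in> Uv n" "i2 \<in> Uv n"
  shows "(\<Sum>j\<in>nbrs n i1 \<inter> nbrs n i2. c i1 j * cnj (c i2 j)) = (if i1 = i2 then 1 else 0)"
  using assms by (simp add: admissible_def Uc_eq_Uv)

lemma admissible_cols_orthonormal:
  assumes "admissible n c" "0 < n" "\<forall>(i, j)\<in>edges n. c i j \<noteq> 0" "j1 \<in> Vv n" "j2 \<in> Vv n"
  shows "(\<Sum>i\<in>nbrs n j1 \<inter> nbrs n j2. c i j1 * cnj (c i j2)) = (if j1 = j2 then 1 else 0)"
  using assms by (simp add: admissible_def Vc_eq_Vv)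

lemma cmod_opposite_edges_eq:
  assumes adm: "admissible n c" and nz: "\<forall>(i, j)\<in>edges n. c i j \<noteq> 0"
    and x: "x \<in> Uv n" and kl: "k < n" "l < n" "k \<noteq> l"
  shows "cmod (c x (flip x k)) = cmod (c (flip (flip x k) l) (flip x l))"
proof -
  define y where "y = flip (flip x k) l"
  have xv: "x \<in> verts n" using x by (simp add: Uv_def)
  have V: "flip x k \<in> Vv n" "flip x l \<in> Vv n"
    using x kl by (simp_all add: flip_Uv_in_Vv)
  have yU: "y \<in> Uv n"
    unfolding y_def using V(1) \<open>l < n\<close> by (rule flip_Vv_in_Uv)
  have y_edges: "flip y l = flip x k" "flip y k = flip x l"
    by (simp_all add: y_def flip_commute)
  have "x \<noteq> y"
    unfolding y_def by (metis flip_flip_neq \<open>k \<noteq> l\<close>)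
  have "flip x k \<noteq> flip x l"
    using \<open>k \<noteq> l\<close> by (simp add: flip_eq_flip_iff)
  have "(x, flip x l) \<in> edges n" "(y, flip y l) \<in> edges n"
    using x yU \<open>l < n\<close> by (auto simp: mem_edges_iff)
  then have "c x (flip x l) \<noteq> 0" "c y (flip x k) \<noteq> 0"
    using nz y_edges(1) by auto
  moreover have "c x (flip x k) * cnj (c x (flip x l)) + c y (flip x k) * cnj (c y (flip x l)) = 0"
    using admissible_cols_orthonormal[OF adm _ nz V] kl \<open>x \<noteq> y\<close> \<open>flip x k \<noteq> flip x l\<close>
    by (simp add: nbrs_Int_flip_flip[OF xv kl] y_def)
  moreover have "c x (flip x k) * cnj (c y (flip x k)) + c x (flip x l) * cnj (c y (flip x l)) = 0"
    using admissible_rows_orthonormal[OF adm _ nz x yU] kl \<open>x \<noteq> y\<close> \<open>flip x k \<noteq> flip x l\<close>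
    by (simp add: nbrs_Int_nbrs_flip_flip[OF xv kl] y_def)
  ultimately show ?thesis
    unfolding y_def[symmetric] using cmod_diag_eq_if_orthogonal by blast
qed

definition edge_norm :: "nat \<Rightarrow> (nat \<Rightarrow> nat \<Rightarrow> complex) \<Rightarrow> nat \<Rightarrow> nat \<Rightarrow> real" where
  "edge_norm n c k x = (if x \<in> Uv n then cmod (c x (flip x k)) else cmod (c (flip x k) x))"

lemma edge_norm_flip:
  assumes adm: "admissible n c" and nz: "\<forall>(i, j)\<in>edges n. c i j \<noteq> 0"
    and x: "x \<in> verts n" and k: "k < n" and l: "l < n"
  shows "edge_norm n c k (flip x l) = edge_norm n c k x"
proof -
  have flip_Uv: "edge_norm n c k (flip u l) = edge_norm n c k u" if u: "u \<in> Uv n" for u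
  proof -
    have "flip u l \<notin> Uv n" "flip u k \<notin> Uv n"
      using u k l flip_Uv_in_Vv Uv_Int_Vv by blast+
    then show ?thesis
      using u cmod_opposite_edges_eq[OF adm nz u k l]
      by (cases "l = k") (simp_all add: edge_norm_def flip_commute)
  qed
  show ?thesis
  proof (cases "x \<in> Uv n")
    case False
    then have "flip x l \<in> Uv n"
      using x l flip_Vv_in_Uv verts_eq_Uv_Un_Vv by blast
    then show ?thesis using flip_Uv by fastforce
  qed (rule flip_Uv)
qed

lemma sum_sq_cmod_row_eq_1:
  assumes "admissible n c" "0 < n" "\<forall>(i, j)\<in>edges n. c i j \<noteq> 0" "i \<in> Uv n"
  shows "(\<Sum>k<n. (cmod (c i (flip i k)))\<^sup>2) = 1"
proof -
  have "(\<Sum>k<n. c i (flip i k) * cnj (c i (flip i k))) = 1"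
    using admissible_rows_orthonormal[OF assms assms(4)] assms(4)
    by (simp add: sum_nbrs Uv_def)
  then have "(\<Sum>k<n. complex_of_real ((cmod (c i (flip i k)))\<^sup>2)) = 1"
    by (simp only: complex_norm_square)
  then show ?thesis
    by (simp only: of_real_sum[symmetric] of_real_eq_1_iff)
qed

theorem lemma5p1:
  fixes n :: nat and c :: "nat \<Rightarrow> nat \<Rightarrow> complex"
  assumes "n \<ge> 1"
    and "admissible n c"
    and "\<forall>(i, j)\<in>edges n. c i j \<noteq> 0"
  shows "\<exists>t\<in>Delta n. \<forall>(i, j)\<in>edges n. \<forall>k<n. i = flip j k \<longrightarrow> cmod (c i j) = sqrt (t k)"
proof
  define t where "t k = (edge_norm n c k 0)\<^sup>2" for k
  show "t \<in> Delta n"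
    using sum_sq_cmod_row_eq_1[OF assms(2) _ assms(3) zero_in_Uv] assms(1)
    by (simp add: Delta_def t_def edge_norm_def zero_in_Uv)
  have "cmod (c i j) = sqrt (t k)" if "(i, j) \<in> edges n" "k < n" "i = flip j k" for i j k
  proof -
    have "i \<in> Uv n" "j = flip i k"
      using that by (simp_all add: mem_edges_iff)
    then have "cmod (c i j) = edge_norm n c k i"
      by (simp add: edge_norm_def)
    also have "\<dots> = edge_norm n c k 0"
      using flip_invariant_imp_const[OF edge_norm_flip[OF assms(2,3) _ \<open>k < n\<close>]] \<open>i \<in> Uv n\<close>
      by (simp add: Uv_def)
    finally show ?thesis
      by (simp add: t_def edge_norm_def)
  qed
  then show "\<forall>(i, j)\<in>edges n. \<forall>k<n. i = flip j k \<longrightarrow> cmod (c i j) = sqrt (t k)"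
    by blast
qed

end
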